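(* Fix a mass ratio $0<\mu<1$ and set $e=(1-\mu,0)$, $s=(-\mu,0)$. Let $$V(q)=-\frac{\mu}{|q-e|}-\frac{1-\mu}{|q-s|}-\frac12|q|^2,\qquad q\in\mathbb{R}^2\setminus\{e,s\},$$ and consider the planar circular restricted three-body problem, i.e. the Hamiltonian $H(q,p)=\tfrac12\big((p_1+q_2)^2+(p_2-q_1)^2\big)+V(q)$ on $T^*(\mathbb{R}^2\setminus\{e,s\})$ with the standard symplectic form, whose solutions in configuration space satisfy $$\ddot q_1=2\dot q_2-\frac{\partial V}{\partial q_1}(q),\qquad \ddot q_2=-2\dot q_1-\frac{\partial V}{\partial q_2}(q).$$ Let $\ell_2$ and $\ell_3$ be the collinear Lagrange points defined in the context, and let $c<\min\{V(\ell_2),V(\ell_3)\}$. Then every periodic solution $x\colon\mathbb{R}\to\mathbb{R}^2\setminus\{e,s\}$ of these equations with energy $c$ whose image lies in the bounded Hill's region $\mathfrak{K}_c^b$ has at least two distinct syzygies during each period: if $T>0$ is a period of $x$, there exist at least two distinct times $t\in[0,T)$ with $x_2(t)=0$.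
   Context: The function $u(x)=V(x,0)$ restricted to the $q_1$-axis is strictly concave on each of the intervals $(-\infty,-\mu)$, $(-\mu,1-\mu)$, $(1-\mu,\infty)$ and tends to $-\infty$ at their endpoints. Its unique maxima on these intervals are denoted $\ell_3\in(-\infty,-\mu)$, $\ell_1\in(-\mu,1-\mu)$ and $\ell_2\in(1-\mu,\infty)$ (viewed as points $(\ell_i,0)$ of the plane). These are critical points of $V$ with $V(\ell_1)<V(\ell_2)$ and $V(\ell_1)<V(\ell_3)$. The energy of a solution is the constant value of $H$ along it, where $p=(\dot q_1-q_2,\dot q_2+q_1)$. The Hill's region at energy $c$ is $\mathfrak{K}_c=\{q\in\mathbb{R}^2\setminus\{e,s\}: V(q)\le c\}$. For $c<\min\{V(\ell_2),V(\ell_3)\}$, $\mathfrak{K}_c$ splits into one unbounded connected component and a bounded part $\mathfrak{K}_c^b$, namely the union of the bounded connected components. If $V(\ell_1)\le c$, this bounded part is a single component containing $e$ and $s$ in its closure. If $c<V(\ell_1)$, it consists of two components, one around each of $e$ and $s$. A syzygy of $x$ is a time at which $x$ lies on the $q_1$-axis, i.e. $x_2(t)=0$. *)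

theory Defs
  imports "HOL-Analysis.Analysis"
begin

definition earth :: "real \<Rightarrow> real \<times> real" where
  "earth \<mu> = (1 - \<mu>, 0)"

definition sun :: "real \<Rightarrow> real \<times> real" where
  "sun \<mu> = (- \<mu>, 0)"

definition V :: "real \<Rightarrow> real \<times> real \<Rightarrow> real" where
  "V \<mu> q = - \<mu> / norm (q - earth \<mu>) - (1 - \<mu>) / norm (q - sun \<mu>) - (1/2) * (norm q)\<^sup>2"

definition dV1 :: "real \<Rightarrow> real \<times> real \<Rightarrow> real" where
  "dV1 \<mu> q = deriv (\<lambda>a. V \<mu> (a, snd q)) (fst q)"

definition dV2 :: "real \<Rightarrow> real \<times> real \<Rightarrow> real" where
  "dV2 \<mu> q = deriv (\<lambda>b. V \<mu> (fst q, b)) (snd q)"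

definition H :: "real \<Rightarrow> real \<times> real \<Rightarrow> real \<times> real \<Rightarrow> real" where
  "H \<mu> q p = (1/2) * ((fst p + snd q)\<^sup>2 + (snd p - fst q)\<^sup>2) + V \<mu> q"

definition ell2 :: "real \<Rightarrow> real \<times> real" where
  "ell2 \<mu> = ((THE x. x \<in> {1 - \<mu><..} \<and> (\<forall>y\<in>{1 - \<mu><..}. V \<mu> (y, 0) \<le> V \<mu> (x, 0))), 0)"

definition ell3 :: "real \<Rightarrow> real \<times> real" where
  "ell3 \<mu> = ((THE x. x \<in> {..<- \<mu>} \<and> (\<forall>y\<in>{..<- \<mu>}. V \<mu> (y, 0) \<le> V \<mu> (x, 0))), 0)"

definition hill :: "real \<Rightarrow> real \<Rightarrow> (real \<times> real) set" where
  "hill \<mu> c = {q. q \<noteq> earth \<mu> \<and> q \<noteq> sun \<mu> \<and> V \<mu> q \<le> c}"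

definition hill_bounded :: "real \<Rightarrow> real \<Rightarrow> (real \<times> real) set" where
  "hill_bounded \<mu> c = \<Union> {C \<in> components (hill \<mu> c). bounded C}"

definition is_solution :: "real \<Rightarrow> (real \<Rightarrow> real \<times> real) \<Rightarrow> (real \<Rightarrow> real \<times> real) \<Rightarrow> (real \<Rightarrow> real \<times> real) \<Rightarrow> bool" where
  "is_solution \<mu> x x' x'' \<longleftrightarrow>
     (\<forall>t. x t \<noteq> earth \<mu> \<and> x t \<noteq> sun \<mu>) \<and>
     (\<forall>t. (x has_vector_derivative x' t) (at t)) \<and>
     (\<forall>t. (x' has_vector_derivative x'' t) (at t)) \<and>
     (\<forall>t. fst (x'' t) = 2 * snd (x' t) - dV1 \<mu> (x t) \<and>
          snd (x'' t) = - 2 * fst (x' t) - dV2 \<mu> (x t))"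

definition has_energy :: "real \<Rightarrow> (real \<Rightarrow> real \<times> real) \<Rightarrow> (real \<Rightarrow> real \<times> real) \<Rightarrow> real \<Rightarrow> bool" where
  "has_energy \<mu> x x' c \<longleftrightarrow>
     (\<forall>t. H \<mu> (x t) (fst (x' t) - snd (x t), snd (x' t) + fst (x t)) = c)"

end

theory Submission
  imports Defs
begin

text \<open>
  Off the \<open>q\<^sub>1\<close>-axis, \<open>\<partial>V/\<partial>q\<^sub>2 = q\<^sub>2 (\<mu>/|q-e|\<^sup>3 + (1-\<mu>)/|q-s|\<^sup>3 - 1)\<close>, and the bracket
  decreases as \<open>|q\<^sub>2|\<close> grows. If the bracket were \<open>\<le> 0\<close> at a point of the bounded Hill's
  region, \<open>V\<close> would be nonincreasing along the vertical ray leading away from the axis, so the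
  whole ray would lie in the same (bounded) component: impossible. Hence \<open>\<partial>V/\<partial>q\<^sub>2\<close> vanishes
  nowhere on the bounded Hill's region off the axis.
  The second equation of motion says \<open>(x\<^sub>2' + 2 x\<^sub>1)' = -\<partial>V/\<partial>q\<^sub>2(x)\<close>. The left-hand side is
  the derivative of a \<open>T\<close>-periodic function, so by Rolle it vanishes in every open time window of
  length \<open>T\<close>; thus every such window contains a syzygy. With at most one syzygy per period, the
  window starting at that syzygy would contain none.
  Only the inclusion of the orbit in the bounded Hill's region is used: neither the energy nor
  the bound on \<open>c\<close> enters the argument.
\<close>

definition attraction :: "real \<Rightarrow> real \<times> real \<Rightarrow> real" where
  "attraction \<mu> q = \<mu> / norm (q - earth \<mu>) ^ 3 + (1 - \<mu>) / norm (q - sun \<mu>) ^ 3"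

lemma inverse_norm_vertical_has_derivative:
  fixes p :: "real \<times> real"
  assumes "(a, b) \<noteq> p"
  shows "((\<lambda>y. 1 / norm ((a, y) - p)) has_real_derivative
           - (b - snd p) / norm ((a, b) - p) ^ 3) (at b)"
proof -
  define K where "K = (a - fst p)\<^sup>2"
  have norm_eq: "norm ((a, y) - p) = sqrt (K + (y - snd p)\<^sup>2)" for y
    by (cases p) (simp add: K_def norm_Pair)
  have "K + (b - snd p)\<^sup>2 > 0"
    using assms by (cases p) (auto simp: K_def sum_power2_gt_zero_iff)
  then have "((\<lambda>y. 1 / sqrt (K + (y - snd p)\<^sup>2)) has_real_derivative
               - (b - snd p) / sqrt (K + (b - snd p)\<^sup>2) ^ 3) (at b)"
    by (auto intro!: derivative_eq_intros
        simp: power3_eq_cube divide_simps add_pos_nonneg algebra_simps)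
  then show ?thesis
    by (simp only: norm_eq)
qed

lemma V_vertical_has_derivative:
  assumes "(a, b) \<noteq> earth \<mu>" and "(a, b) \<noteq> sun \<mu>"
  shows "((\<lambda>y. V \<mu> (a, y)) has_real_derivative b * (attraction \<mu> (a, b) - 1)) (at b)"
proof -
  have V_eq: "V \<mu> (a, y) = - \<mu> * (1 / norm ((a, y) - earth \<mu>))
      - (1 - \<mu>) * (1 / norm ((a, y) - sun \<mu>)) - (a\<^sup>2 + y\<^sup>2) / 2" for y
    by (simp add: V_def norm_Pair)
  have earth_term: "((\<lambda>y. 1 / norm ((a, y) - earth \<mu>)) has_real_derivative
      - b / norm ((a, b) - earth \<mu>) ^ 3) (at b)"
    using inverse_norm_vertical_has_derivative[OF assms(1)] by (simp add: earth_def)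
  have sun_term: "((\<lambda>y. 1 / norm ((a, y) - sun \<mu>)) has_real_derivative
      - b / norm ((a, b) - sun \<mu>) ^ 3) (at b)"
    using inverse_norm_vertical_has_derivative[OF assms(2)] by (simp add: sun_def)
  have "((\<lambda>y. (a\<^sup>2 + y\<^sup>2) / 2) has_real_derivative b) (at b)"
    by (auto intro!: derivative_eq_intros)
  then have "((\<lambda>y. V \<mu> (a, y)) has_real_derivative
      - \<mu> * (- b / norm ((a, b) - earth \<mu>) ^ 3)
      - (1 - \<mu>) * (- b / norm ((a, b) - sun \<mu>) ^ 3) - b) (at b)"
    unfolding V_eq by (intro DERIV_diff DERIV_cmult earth_term sun_term)
  then show ?thesis
    by (simp add: attraction_def algebra_simps)
qed

lemma dV2_eq:
  assumes "q \<noteq> earth \<mu>" and "q \<noteq> sun \<mu>"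
  shows "dV2 \<mu> q = snd q * (attraction \<mu> q - 1)"
  using V_vertical_has_derivative[of "fst q" "snd q"] assms
  unfolding dV2_def by (auto intro: DERIV_imp_deriv)

lemma attraction_vertical_antimono:
  assumes "0 \<le> \<mu>" and "\<mu> \<le> 1" and "b \<noteq> 0" and "\<bar>b\<bar> \<le> \<bar>c\<bar>"
  shows "attraction \<mu> (a, c) \<le> attraction \<mu> (a, b)"
proof -
  have inverse_cube_le: "m / norm ((a, c) - p) ^ 3 \<le> m / norm ((a, b) - p) ^ 3"
    if "m \<ge> 0" and "snd p = 0" for m and p :: "real \<times> real"
  proof -
    have "norm ((a, b) - p) \<le> norm ((a, c) - p)"
      using assms(4) that(2) by (cases p) (simp add: norm_Pair abs_le_square_iff)
    moreover have "norm ((a, b) - p) > 0"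
      using assms(3) that(2) by (cases p) (auto simp: zero_prod_def)
    ultimately show ?thesis
      using that(1) by (intro divide_left_mono power_mono mult_pos_pos) auto
  qed
  show ?thesis
    unfolding attraction_def using assms(1,2)
    by (intro add_mono inverse_cube_le) (simp_all add: earth_def sun_def)
qed

lemma V_vertical_ray_antimono:
  assumes "0 < \<mu>" and "\<mu> < 1" and "b \<noteq> 0" and "attraction \<mu> (a, b) \<le> 1" and "1 \<le> t"
  shows "V \<mu> (a, t * b) \<le> V \<mu> (a, b)"
proof -
  have "V \<mu> (a, t * b) \<le> V \<mu> (a, 1 * b)"
  proof (rule DERIV_nonpos_imp_nonincreasing[OF assms(5)])
    fix s :: real
    assume s: "1 \<le> s"
    have off_axis: "(a, s * b) \<noteq> earth \<mu>" "(a, s * b) \<noteq> sun \<mu>"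
      using s assms(3) by (auto simp: earth_def sun_def)
    have "((\<lambda>s. V \<mu> (a, s * b)) has_real_derivative
            (s * b) * (attraction \<mu> (a, s * b) - 1) * b) (at s)"
      by (rule DERIV_chain2[where g = "\<lambda>s. s * b", OF V_vertical_has_derivative[OF off_axis]])
        (auto intro!: derivative_eq_intros)
    moreover have "attraction \<mu> (a, s * b) \<le> attraction \<mu> (a, b)"
      using assms(1-3) s by (intro attraction_vertical_antimono) (auto simp: abs_mult)
    then have "s * b\<^sup>2 * (attraction \<mu> (a, s * b) - 1) \<le> 0"
      using s assms(4) by (intro mult_nonneg_nonpos) auto
    moreover have "(s * b) * (attraction \<mu> (a, s * b) - 1) * b
        = s * b\<^sup>2 * (attraction \<mu> (a, s * b) - 1)"
      by (simp add: power2_eq_square)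
    ultimately show "\<exists>y. ((\<lambda>s. V \<mu> (a, s * b)) has_real_derivative y) (at s) \<and> y \<le> 0"
      by (metis order_refl)
  qed
  then show ?thesis
    by simp
qed

lemma attraction_gt_one_in_hill_bounded:
  assumes "0 < \<mu>" and "\<mu> < 1" and "q \<in> hill_bounded \<mu> c" and "snd q \<noteq> 0"
  shows "attraction \<mu> q > 1"
proof (rule ccontr)
  assume "\<not> attraction \<mu> q > 1"
  then have weak: "attraction \<mu> (fst q, snd q) \<le> 1"
    by simp
  obtain C where C: "C \<in> components (hill \<mu> c)" "bounded C" "q \<in> C"
    using assms(3) unfolding hill_bounded_def by auto
  have "q \<in> hill \<mu> c"
    using C in_components_subset by blast
  define ray where "ray = (\<lambda>t. (fst q, t * snd q)) ` {1..}"
  have ray_hill: "ray \<subseteq> hill \<mu> c"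
  proof
    fix p
    assume "p \<in> ray"
    then obtain t where t: "1 \<le> t" "p = (fst q, t * snd q)"
      unfolding ray_def by auto
    have "V \<mu> p \<le> V \<mu> q"
      using V_vertical_ray_antimono[OF assms(1,2,4) weak t(1)] t(2) by simp
    then show "p \<in> hill \<mu> c"
      using \<open>q \<in> hill \<mu> c\<close> t assms(4) by (auto simp: hill_def earth_def sun_def)
  qed
  have "connected ray"
    unfolding ray_def by (intro connected_continuous_image) (auto intro!: continuous_intros)
  moreover have "q \<in> C \<inter> ray"
    using C(3) unfolding ray_def by (auto intro!: image_eqI[of _ _ 1])
  ultimately have "ray \<subseteq> C"
    using components_maximal[OF C(1) _ ray_hill] by blast
  then have "bounded ray"
    using C(2) bounded_subset by blast
  then obtain B where B: "\<forall>p\<in>ray. norm p \<le> B"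
    unfolding bounded_iff by blast
  define t where "t = (\<bar>B\<bar> + 1) / \<bar>snd q\<bar> + 1"
  have "1 \<le> t"
    unfolding t_def by simp
  then have "norm (fst q, t * snd q) \<le> B"
    using B unfolding ray_def by auto
  moreover have "\<bar>t * snd q\<bar> = t * \<bar>snd q\<bar>"
    using \<open>1 \<le> t\<close> by (simp add: abs_mult)
  moreover have "t * \<bar>snd q\<bar> = \<bar>B\<bar> + 1 + \<bar>snd q\<bar>"
    using assms(4) by (simp add: t_def field_simps)
  ultimately show False
    using norm_snd_le[of "t * snd q" "fst q"] by simp
qed

lemma dV2_ne_zero_in_hill_bounded:
  assumes "0 < \<mu>" and "\<mu> < 1" and "q \<in> hill_bounded \<mu> c" and "snd q \<noteq> 0"
  shows "dV2 \<mu> q \<noteq> 0"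
proof -
  have "q \<in> hill \<mu> c"
    using assms(3) in_components_subset unfolding hill_bounded_def by blast
  then have "dV2 \<mu> q = snd q * (attraction \<mu> q - 1)"
    by (intro dV2_eq) (auto simp: hill_def)
  then show ?thesis
    using attraction_gt_one_in_hill_bounded[OF assms] assms(4) by simp
qed

lemma periodic_vector_derivative:
  fixes f :: "real \<Rightarrow> 'a::real_normed_vector"
  assumes "\<And>t. (f has_vector_derivative f' t) (at t)" and "\<And>t. f (t + T) = f t"
  shows "f' (t + T) = f' t"
proof -
  have shift: "((\<lambda>s. s + T) has_vector_derivative 1) (at t)"
    by (auto intro!: derivative_eq_intros)
  have "((\<lambda>s. f (s + T)) has_vector_derivative f' (t + T)) (at t)"
    using vector_diff_chain_at[OF shift, of f "f' (t + T)"] assms(1) by (simp add: o_def)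
  then have "(f has_vector_derivative f' (t + T)) (at t)"
    using assms(2) by simp
  then show ?thesis
    using assms(1) vector_derivative_unique_at by blast
qed

lemma is_solution_snd_equation_derivative:
  assumes "is_solution \<mu> x x' x''"
  shows "((\<lambda>t. snd (x' t) + 2 * fst (x t)) has_real_derivative - dV2 \<mu> (x t)) (at t)"
proof -
  have "(x has_vector_derivative x' t) (at t)" and "(x' has_vector_derivative x'' t) (at t)"
    using assms unfolding is_solution_def by blast+
  then have "((\<lambda>t. snd (x' t) + 2 * fst (x t)) has_real_derivative
      snd (x'' t) + 2 * fst (x' t)) (at t)"
    unfolding has_real_derivative_iff_has_vector_derivative
    by (intro derivative_intros bounded_linear.has_vector_derivative[OF bounded_linear_snd]
        bounded_linear.has_vector_derivative[OF bounded_linear_fst])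
  then show ?thesis
    using assms unfolding is_solution_def by simp
qed

lemma periodic_solution_dV2_vanishes:
  assumes "is_solution \<mu> x x' x''" and "T > 0" and "\<And>t. x (t + T) = x t"
  shows "\<exists>z\<in>{t0<..<t0 + T}. dV2 \<mu> (x z) = 0"
proof -
  define F where "F t = snd (x' t) + 2 * fst (x t)" for t
  have F_deriv: "(F has_real_derivative - dV2 \<mu> (x t)) (at t)" for t
    unfolding F_def[abs_def] using assms(1) by (rule is_solution_snd_equation_derivative)
  have "\<And>t. (x has_vector_derivative x' t) (at t)"
    using assms(1) unfolding is_solution_def by blast
  then have "x' (t + T) = x' t" for t
    using assms(3) by (rule periodic_vector_derivative)
  then have "F t0 = F (t0 + T)"
    using assms(3) by (simp add: F_def)
  moreover have "continuous_on {t0..t0 + T} F"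
    using F_deriv by (meson DERIV_isCont continuous_at_imp_continuous_on)
  moreover have "F differentiable (at t)" for t
    using F_deriv real_differentiable_def by blast
  ultimately obtain z where "t0 < z" "z < t0 + T" "(F has_real_derivative 0) (at z)"
    using Rolle[of t0 "t0 + T" F] assms(2) by auto
  then show ?thesis
    using F_deriv[of z] DERIV_unique by fastforce
qed

lemma periodic_zero_free_window:
  fixes f :: "real \<Rightarrow> 'a::zero"
  assumes "\<And>t. f (t + T) = f t"
    and "\<And>t1 t2. t1 \<in> {0..<T} \<Longrightarrow> t2 \<in> {0..<T} \<Longrightarrow> f t1 = 0 \<Longrightarrow> f t2 = 0 \<Longrightarrow> t1 = t2"
  shows "\<exists>t0. \<forall>s\<in>{t0<..<t0 + T}. f s \<noteq> 0"
proof (cases "\<exists>z\<in>{0..<T}. f z = 0")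
  case True
  then obtain z where z: "z \<in> {0..<T}" "f z = 0"
    by blast
  have "f s \<noteq> 0" if s: "z < s" "s < z + T" for s
  proof (cases "s < T")
    case True
    then show ?thesis
      using assms(2)[of z s] z s by auto
  next
    case False
    then have "f (s - T) \<noteq> 0"
      using assms(2)[of z "s - T"] z s by auto
    then show ?thesis
      using assms(1)[of "s - T"] by simp
  qed
  then show ?thesis
    by (intro exI[of _ z]) simp
next
  case False
  then show ?thesis
    by (intro exI[of _ 0]) auto
qed

theorem theorem1p1:
  fixes \<mu> c T :: real and x x' x'' :: "real \<Rightarrow> real \<times> real"
  assumes "0 < \<mu>" and "\<mu> < 1"
    and "c < min (V \<mu> (ell2 \<mu>)) (V \<mu> (ell3 \<mu>))"
    and "is_solution \<mu> x x' x''"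
    and "has_energy \<mu> x x' c"
    and "range x \<subseteq> hill_bounded \<mu> c"
    and "T > 0" and "\<forall>t. x (t + T) = x t"
  shows "\<exists>t1 t2. t1 \<in> {0..<T} \<and> t2 \<in> {0..<T} \<and> t1 \<noteq> t2 \<and> snd (x t1) = 0 \<and> snd (x t2) = 0"
proof (rule ccontr)
  assume "\<not> ?thesis"
  then obtain t0 where t0: "\<forall>s\<in>{t0<..<t0 + T}. snd (x s) \<noteq> 0"
    using periodic_zero_free_window[of "\<lambda>t. snd (x t)" T] assms(8) by metis
  obtain z where z: "z \<in> {t0<..<t0 + T}" "dV2 \<mu> (x z) = 0"
    using periodic_solution_dV2_vanishes[OF assms(4,7)] assms(8) by blast
  have "x z \<in> hill_bounded \<mu> c"
    using assms(6) by blast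
  then show False
    using dV2_ne_zero_in_hill_bounded[OF assms(1,2)] t0 z by blast
qed

end
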